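(* Suppose there are a non-negative function $j$ on $(0,\infty)$ and constants $a\ge0$, $c_1,c_2\ge1$ such that $c_1^{-1}a|y|^2\le\sum_{i,j=1}^da_{ij}y_iy_j\le c_1a|y|^2$ and $c_1^{-1}j(|y|/c_2)\le J(y)\le c_1j(c_2|y|)$ for all $y\in\mathbb R^d$ ($y\neq0$ in the second). Then there is $c>0$ such that $c^{-1}\Psi_1^*(r)\le\Psi^*(r)\le c\,\Psi_1^*(r)$ for all $r>0$; in particular, there is $c\ge1$ with $\Psi^*(r)\le c\Psi_1^*(r)$ for all $r>0$.
   Context: Let $d\ge1$ and let $X$ be a symmetric Lévy process on $\mathbb R^d$ with Lévy exponent $\Psi(\xi)=\sum_{i,j=1}^d a_{ij}\xi_i\xi_j+\int_{\mathbb R^d}(1-\cos(\xi\cdot y))J(y)\,dy$ (i.e. $\mathbb E_x[e^{i\xi\cdot(X_t-X_0)}]=e^{-t\Psi(\xi)}$), where $A=(a_{ij})$ is a constant symmetric nonnegative definite matrix and $J\ge0$ is symmetric on $\mathbb R^d\setminus\{0\}$ with $\int(1\wedge|z|^2)J(z)dz<\infty$; $\Psi$ is unbounded. $\Psi^*(r)=\sup_{|z|\le r}\Psi(z)$ and $\Psi_1^*(r)=\sup_{s\in(-r,r)}\Psi((0,\dots,0,s))$. *)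

theory Defs
  imports "HOL-Analysis.Analysis"
begin

definition levy_exponent ::
  "real^'d^'d \<Rightarrow> (real^'d \<Rightarrow> real) \<Rightarrow> real^'d \<Rightarrow> real" where
  "levy_exponent A J \<xi> =
     \<xi> \<bullet> (A *v \<xi>) + (\<integral>y. (1 - cos (\<xi> \<bullet> y)) * J y \<partial>lborel)"

definition Psi_star :: "(real^'d \<Rightarrow> real) \<Rightarrow> real \<Rightarrow> real" where
  "Psi_star \<Psi> r = Sup (\<Psi> ` cball 0 r)"

definition last_idx :: "'d::{finite,linorder}" where
  "last_idx = Max UNIV"

definition Psi1_star :: "(real^'d::{finite,linorder} \<Rightarrow> real) \<Rightarrow> real \<Rightarrow> real" where
  "Psi1_star \<Psi> r = Sup ((\<lambda>s. \<Psi> (\<chi> i. if i = last_idx then s else 0)) ` {-r<..<r})"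

end

theory Submission
  imports Defs
begin

text \<open>Write \<open>\<Psi>(\<xi>) = \<xi>\<bullet>A\<xi> + I(\<xi>)\<close> with \<open>I\<close> the jump part. The inequality
  \<open>1 - cos 2t \<le> 4(1 - cos t)\<close> gives \<open>\<Psi>(2\<xi>) \<le> 4\<Psi>(\<xi>)\<close>, and
  \<open>1 - cos (\<Sum>t\<^sub>k) \<le> 2\<^sup>n \<Sum>(1 - cos t\<^sub>k)\<close> splits \<open>I(x)\<close> into the coordinate directions
  \<open>I(x\<^sub>k e\<^sub>k)\<close>. Since \<open>J\<close> is comparable to the radial profile \<open>j\<close>,
  \<open>J(y) \<le> c\<^sub>1\<^sup>2 J(c\<^sub>2\<^sup>2 \<sigma>y)\<close> for every coordinate permutation \<open>\<sigma>\<close>, so a linear change of variables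
  bounds each \<open>I(s e\<^sub>k)\<close> by \<open>c\<^sub>1\<^sup>2 I((s/c\<^sub>2\<^sup>2) e\<^sub>d)\<close>; comparability of \<open>A\<close> with \<open>a\<cdot>Id\<close>
  does the same for the quadratic part. Hence \<open>\<Psi>(\<xi>)\<close> is at most a constant times the values of \<open>\<Psi>\<close>
  on the last axis within radius \<open>|\<xi>|/2\<close>, which gives \<open>\<Psi>\<^sup>* \<le> c \<Psi>\<^sub>1\<^sup>*\<close>; the reverse
  inequality is trivial.\<close>

lemma sin_square_le_one_minus_cos: "(sin t)\<^sup>2 \<le> 2 * (1 - cos (t::real))"
proof -
  have "(sin t)\<^sup>2 = (1 - cos t) * (1 + cos t)"
    by (simp add: sin_squared_eq algebra_simps power2_eq_square)
  also have "\<dots> \<le> (1 - cos t) * 2"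
    by (intro mult_left_mono) auto
  finally show ?thesis by simp
qed

lemma one_minus_cos_le_half_square: "1 - cos (t::real) \<le> t\<^sup>2 / 2"
proof -
  have "\<bar>sin (t/2)\<bar> \<le> \<bar>t/2\<bar>" by (rule abs_sin_x_le_abs_x)
  then have "(sin (t/2))\<^sup>2 \<le> (t/2)\<^sup>2" by (rule abs_le_square_iff[THEN iffD1])
  then show ?thesis using cos_double_sin[of "t/2"] by (simp add: power_divide)
qed

lemma one_minus_cos_double_le: "1 - cos (2 * t) \<le> 4 * (1 - cos (t::real))"
  using cos_double_sin[of t] sin_square_le_one_minus_cos[of t] by simp

lemma one_minus_cos_add_le: "1 - cos (s + t) \<le> 2 * (1 - cos s) + 2 * (1 - cos (t::real))"
proof -
  have "1 - cos (s + t) = (1 - cos s) + (1 - cos t) - (1 - cos s) * (1 - cos t) + sin s * sin t"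
    by (simp add: cos_add algebra_simps)
  also have "\<dots> \<le> (1 - cos s) + (1 - cos t) + ((sin s)\<^sup>2 + (sin t)\<^sup>2) / 2"
  proof -
    have "sin s * sin t \<le> ((sin s)\<^sup>2 + (sin t)\<^sup>2) / 2"
      using sum_squares_ge_zero[of "sin s - sin t" 0] by (simp add: power2_eq_square algebra_simps)
    moreover have "0 \<le> (1 - cos s) * (1 - cos t)" by simp
    ultimately show ?thesis by linarith
  qed
  also have "\<dots> \<le> 2 * (1 - cos s) + 2 * (1 - cos t)"
    using sin_square_le_one_minus_cos[of s] sin_square_le_one_minus_cos[of t] by (simp add: field_simps)
  finally show ?thesis .
qed

lemma one_minus_cos_sum_le:
  assumes "finite S"
  shows "1 - cos (\<Sum>k\<in>S. f k) \<le> 2 ^ card S * (\<Sum>k\<in>S. 1 - cos (f k :: real))"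
  using assms
proof (induction S rule: finite_induct)
  case empty
  then show ?case by simp
next
  case (insert x F)
  have "1 - cos (\<Sum>k\<in>insert x F. f k) \<le> 2 * (1 - cos (f x)) + 2 * (1 - cos (\<Sum>k\<in>F. f k))"
    using insert one_minus_cos_add_le by simp
  also have "\<dots> \<le> 2 * (1 - cos (f x)) + 2 * 2 ^ card F * (\<Sum>k\<in>F. 1 - cos (f k))"
    using insert.IH by simp
  also have "\<dots> \<le> 2 ^ card (insert x F) * (\<Sum>k\<in>insert x F. 1 - cos (f k))"
  proof -
    have "2 \<le> (2::real) ^ card (insert x F)" using insert by simp
    then have "2 * (1 - cos (f x)) \<le> 2 ^ card (insert x F) * (1 - cos (f x))"
      by (intro mult_right_mono) auto
    then show ?thesis
      using insert by (simp add: distrib_left)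
  qed
  finally show ?case .
qed

lemma one_minus_cos_inner_le:
  fixes \<xi> y :: "'a::real_inner"
  shows "1 - cos (\<xi> \<bullet> y) \<le> max 2 (norm \<xi> ^ 2) * min 1 (norm y ^ 2)"
proof (cases "norm y \<le> 1")
  case True
  have "(\<xi> \<bullet> y)\<^sup>2 \<le> (norm \<xi> * norm y)\<^sup>2"
    using Cauchy_Schwarz_ineq2[of \<xi> y] by (metis abs_le_square_iff abs_mult abs_norm_cancel)
  then have "1 - cos (\<xi> \<bullet> y) \<le> norm \<xi> ^ 2 * norm y ^ 2 / 2"
    using one_minus_cos_le_half_square[of "\<xi> \<bullet> y"] by (simp add: power_mult_distrib)
  also have "\<dots> \<le> norm \<xi> ^ 2 * norm y ^ 2"
    by simp
  also have "\<dots> \<le> max 2 (norm \<xi> ^ 2) * norm y ^ 2"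
    by (intro mult_right_mono) auto
  finally show ?thesis using True by (simp add: power_le_one)
next
  case False
  then show ?thesis
    using cos_ge_minus_one[of "\<xi> \<bullet> y"] by (simp add: le_max_iff_disj)
qed

lemma
  fixes f :: "'a::euclidean_space \<Rightarrow> real"
  assumes c: "c \<noteq> 0" and [measurable]: "f \<in> borel_measurable borel"
  shows integrable_lborel_scaleR_iff: "integrable lborel (\<lambda>x. f (c *\<^sub>R x)) \<longleftrightarrow> integrable lborel f"
    and integral_lborel_scaleR: "integral\<^sup>L lborel f = \<bar>c\<bar> ^ DIM('a) * integral\<^sup>L lborel (\<lambda>x. f (c *\<^sub>R x))"
proof -
  let ?D = "distr lborel borel (\<lambda>x::'a. 0 + c *\<^sub>R x)"
  have lborel: "lborel = density ?D (\<lambda>_. ennreal (\<bar>c\<bar> ^ DIM('a)))"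
    by (rule lborel_affine[OF c])
  have "integrable lborel f \<longleftrightarrow> integrable ?D (\<lambda>x. \<bar>c\<bar> ^ DIM('a) *\<^sub>R f x)"
    by (subst lborel) (rule integrable_density, auto)
  also have "\<dots> \<longleftrightarrow> integrable lborel (\<lambda>x. f (c *\<^sub>R x))"
    using c by (subst integrable_distr_eq) auto
  finally show "integrable lborel (\<lambda>x. f (c *\<^sub>R x)) \<longleftrightarrow> integrable lborel f" ..
  have "integral\<^sup>L lborel f = integral\<^sup>L ?D (\<lambda>x. \<bar>c\<bar> ^ DIM('a) *\<^sub>R f x)"
    by (subst lborel) (rule integral_density, auto)
  also have "\<dots> = \<bar>c\<bar> ^ DIM('a) * integral\<^sup>L lborel (\<lambda>x. f (c *\<^sub>R x))"
    by (subst integral_distr) auto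
  finally show "integral\<^sup>L lborel f = \<bar>c\<bar> ^ DIM('a) * integral\<^sup>L lborel (\<lambda>x. f (c *\<^sub>R x))" .
qed

definition permute_coords :: "('n \<Rightarrow> 'n) \<Rightarrow> real^'n \<Rightarrow> real^'n" where
  "permute_coords \<sigma> y = (\<chi> i. y $ \<sigma> i)"

lemma permute_coords_nth [simp]: "permute_coords \<sigma> y $ i = y $ \<sigma> i"
  by (simp add: permute_coords_def)

lemma permute_coords_0 [simp]: "permute_coords \<sigma> 0 = 0"
  by (simp add: vec_eq_iff)

lemma borel_measurable_permute_coords [measurable]: "permute_coords \<sigma> \<in> borel_measurable borel"
proof -
  have "linear (permute_coords \<sigma>)"
    by (auto simp: linear_iff vec_eq_iff)
  then show ?thesis
    by (intro borel_measurable_continuous_onI linear_continuous_on) (simp add: linear_conv_bounded_linear)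
qed

lemma norm_permute_coords:
  assumes "bij \<sigma>"
  shows "norm (permute_coords \<sigma> y) = norm y"
  using sum.reindex_bij_betw[OF assms, of "\<lambda>i. y$i * y$i"]
  by (simp add: norm_eq_sqrt_inner inner_vec_def)

lemma prod_Basis_vec: "(\<Prod>b\<in>(Basis::(real^'n) set). f b) = (\<Prod>i\<in>UNIV. f (axis i 1))"
proof -
  have B: "(Basis::(real^'n) set) = range (\<lambda>i. axis i 1)"
    by (auto simp: Basis_vec_def)
  have "inj (\<lambda>i::'n. axis i (1::real))"
    by (auto simp: inj_def axis_eq_axis)
  then show ?thesis
    unfolding B by (simp add: prod.reindex)
qed

lemma lborel_distr_permute_coords:
  assumes \<sigma>: "bij \<sigma>"
  shows "distr lborel borel (permute_coords \<sigma>) = (lborel :: (real^'n) measure)"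
proof (rule lborel_eqI[symmetric])
  fix l u :: "real^'n"
  assume box: "\<And>b. b \<in> Basis \<Longrightarrow> l \<bullet> b \<le> u \<bullet> b"
  have le: "l $ i \<le> u $ i" for i
    using box[of "axis i 1"] by (auto simp: Basis_vec_def inner_axis)
  have inv: "\<sigma> (inv \<sigma> i) = i" "inv \<sigma> (\<sigma> i) = i" for i
    using \<sigma> by (simp_all add: bij_is_inj bij_is_surj surj_f_inv_f)
  have "permute_coords \<sigma> -` box l u = box (permute_coords (inv \<sigma>) l) (permute_coords (inv \<sigma>) u)"
  proof -
    have "(\<forall>i. l $ i < x $ \<sigma> i \<and> x $ \<sigma> i < u $ i) \<longleftrightarrow>
        (\<forall>j. l $ inv \<sigma> j < x $ j \<and> x $ j < u $ inv \<sigma> j)" for x :: "real^'n"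
      by (metis inv)
    then show ?thesis
      by (auto simp: mem_box_cart)
  qed
  then have "emeasure (distr lborel borel (permute_coords \<sigma>)) (box l u)
      = emeasure lborel (box (permute_coords (inv \<sigma>) l) (permute_coords (inv \<sigma>) u))"
    by (simp add: emeasure_distr)
  also have "\<dots> = (\<Prod>i\<in>UNIV. u $ inv \<sigma> i - l $ inv \<sigma> i)"
  proof -
    have "\<forall>b\<in>Basis. permute_coords (inv \<sigma>) l \<bullet> b \<le> permute_coords (inv \<sigma>) u \<bullet> b"
      using le by (auto simp: Basis_vec_def inner_axis)
    then show ?thesis
      by (simp add: emeasure_lborel_box_eq prod_Basis_vec inner_axis)
  qed
  also have "\<dots> = (\<Prod>b\<in>Basis. (u - l) \<bullet> b)"
    using prod.reindex_bij_betw[OF bij_imp_bij_inv[OF \<sigma>], of "\<lambda>i. u $ i - l $ i"]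
    by (simp add: prod_Basis_vec inner_axis)
  finally show "emeasure (distr lborel borel (permute_coords \<sigma>)) (box l u) = (\<Prod>b\<in>Basis. (u - l) \<bullet> b)" .
qed simp

lemma
  fixes f :: "real^'n \<Rightarrow> real"
  assumes \<sigma>: "bij \<sigma>" and [measurable]: "f \<in> borel_measurable borel"
  shows integrable_lborel_permute_coords_iff:
      "integrable lborel (\<lambda>x. f (permute_coords \<sigma> x)) \<longleftrightarrow> integrable lborel f"
    and integral_lborel_permute_coords:
      "integral\<^sup>L lborel (\<lambda>x. f (permute_coords \<sigma> x)) = integral\<^sup>L lborel f"
  using integrable_distr_eq[of "permute_coords \<sigma>" lborel borel f]
    integral_distr[of "permute_coords \<sigma>" lborel borel f]
  by (simp_all add: lborel_distr_permute_coords[OF \<sigma>])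

lemma comparable_density_le_rescaled:
  fixes J :: "'a::real_normed_vector \<Rightarrow> real"
  assumes c1: "c1 > 0" and c2: "c2 > 0"
    and J_comp: "\<And>y. y \<noteq> 0 \<Longrightarrow> j (norm y / c2) / c1 \<le> J y \<and> J y \<le> c1 * j (c2 * norm y)"
    and y: "y \<noteq> 0" and z: "norm z = norm y"
  shows "J y \<le> c1\<^sup>2 * J (c2\<^sup>2 *\<^sub>R z)"
proof -
  have nz: "norm (c2\<^sup>2 *\<^sub>R z) / c2 = c2 * norm y"
    using c2 z by (simp add: power2_eq_square)
  have "c2\<^sup>2 *\<^sub>R z \<noteq> 0"
    using c2 y z by auto
  then have "j (c2 * norm y) / c1 \<le> J (c2\<^sup>2 *\<^sub>R z)"
    using J_comp[of "c2\<^sup>2 *\<^sub>R z"] unfolding nz by blast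
  then have "j (c2 * norm y) \<le> c1 * J (c2\<^sup>2 *\<^sub>R z)"
    using c1 by (simp add: pos_divide_le_eq mult.commute)
  then have "c1 * j (c2 * norm y) \<le> c1 * (c1 * J (c2\<^sup>2 *\<^sub>R z))"
    using c1 by simp
  then show ?thesis
    using J_comp[OF y] by (simp add: power2_eq_square)
qed

lemma norm_axis: "norm (axis i (t::real)) = \<bar>t\<bar>"
proof -
  have "axis i t = t *\<^sub>R axis i 1"
    by (simp add: vec_eq_iff axis_def)
  then show ?thesis by simp
qed

lemma quadratic_form_le_axis:
  fixes A :: "real^'n^'n"
  assumes c1: "c1 > 0"
    and A_comp: "\<And>y. a * norm y ^ 2 / c1 \<le> y \<bullet> (A *v y) \<and> y \<bullet> (A *v y) \<le> c1 * a * norm y ^ 2"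
  shows "x \<bullet> (A *v x) \<le> c1\<^sup>2 * (axis l (norm x) \<bullet> (A *v axis l (norm x)))"
proof -
  have "x \<bullet> (A *v x) \<le> c1\<^sup>2 * (a * norm (axis l (norm x)) ^ 2 / c1)"
    using A_comp[of x] c1 by (simp add: norm_axis power2_eq_square)
  also have "\<dots> \<le> c1\<^sup>2 * (axis l (norm x) \<bullet> (A *v axis l (norm x)))"
    using A_comp[of "axis l (norm x)"] by (intro mult_left_mono) auto
  finally show ?thesis .
qed

locale levy_density =
  fixes J :: "real^'n \<Rightarrow> real"
  assumes J_borel [measurable]: "J \<in> borel_measurable borel"
    and J_nonneg: "\<And>y. y \<noteq> 0 \<Longrightarrow> 0 \<le> J y"
    and J_integrable: "integrable lborel (\<lambda>z. min 1 (norm z ^ 2) * J z)"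
begin

definition jump_exponent :: "real^'n \<Rightarrow> real" where
  "jump_exponent \<xi> = (\<integral>y. (1 - cos (\<xi> \<bullet> y)) * J y \<partial>lborel)"

lemma jump_integrand_nonneg: "0 \<le> (1 - cos (\<xi> \<bullet> y)) * J y"
  by (cases "y = 0") (auto intro!: mult_nonneg_nonneg J_nonneg)

lemma jump_integrand_le: "(1 - cos (\<xi> \<bullet> y)) * J y \<le> max 2 (norm \<xi> ^ 2) * (min 1 (norm y ^ 2) * J y)"
proof (cases "y = 0")
  case False
  then show ?thesis
    using mult_right_mono[OF one_minus_cos_inner_le J_nonneg] by (simp add: mult.assoc)
qed simp

lemma integrable_jump_integrand: "integrable lborel (\<lambda>y. (1 - cos (\<xi> \<bullet> y)) * J y)"
proof (rule Bochner_Integration.integrable_bound)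
  show "integrable lborel (\<lambda>y. max 2 (norm \<xi> ^ 2) * (min 1 (norm y ^ 2) * J y))"
    using J_integrable by simp
  show "AE y in lborel. norm ((1 - cos (\<xi> \<bullet> y)) * J y)
      \<le> norm (max 2 (norm \<xi> ^ 2) * (min 1 (norm y ^ 2) * J y))"
    using jump_integrand_nonneg jump_integrand_le by (intro AE_I2) (smt (verit) real_norm_def)
qed measurable

lemma jump_exponent_nonneg: "0 \<le> jump_exponent \<xi>"
  unfolding jump_exponent_def by (intro Bochner_Integration.integral_nonneg jump_integrand_nonneg)

lemma jump_exponent_le: "jump_exponent \<xi> \<le> max 2 (norm \<xi> ^ 2) * (\<integral>z. min 1 (norm z ^ 2) * J z \<partial>lborel)"
proof -
  have "jump_exponent \<xi> \<le> (\<integral>y. max 2 (norm \<xi> ^ 2) * (min 1 (norm y ^ 2) * J y) \<partial>lborel)"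
    unfolding jump_exponent_def using J_integrable
    by (intro Bochner_Integration.integral_mono integrable_jump_integrand jump_integrand_le) simp
  then show ?thesis by simp
qed

lemma jump_exponent_double_le: "jump_exponent (2 *\<^sub>R \<xi>) \<le> 4 * jump_exponent \<xi>"
proof -
  have "(1 - cos (2 *\<^sub>R \<xi> \<bullet> y)) * J y \<le> 4 * ((1 - cos (\<xi> \<bullet> y)) * J y)" for y
  proof (cases "y = 0")
    case False
    then show ?thesis
      using mult_right_mono[OF one_minus_cos_double_le[of "\<xi> \<bullet> y"] J_nonneg[OF False]] by (simp add: algebra_simps)
  qed simp
  then have "jump_exponent (2 *\<^sub>R \<xi>) \<le> (\<integral>y. 4 * ((1 - cos (\<xi> \<bullet> y)) * J y) \<partial>lborel)"
    unfolding jump_exponent_def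
    by (intro Bochner_Integration.integral_mono integrable_jump_integrand integrable_mult_right)
  then show ?thesis
    by (simp add: jump_exponent_def)
qed

lemma jump_exponent_le_sum_axis:
  "jump_exponent x \<le> 2 ^ CARD('n) * (\<Sum>k\<in>UNIV. jump_exponent (axis k (x $ k)))"
proof -
  have "(1 - cos (x \<bullet> y)) * J y \<le> 2 ^ CARD('n) * (\<Sum>k\<in>UNIV. (1 - cos (axis k (x $ k) \<bullet> y)) * J y)" for y
  proof -
    have "1 - cos (x \<bullet> y) \<le> 2 ^ CARD('n) * (\<Sum>k\<in>UNIV. 1 - cos (axis k (x $ k) \<bullet> y))"
      using one_minus_cos_sum_le[of UNIV "\<lambda>k. x $ k * y $ k"] by (simp add: inner_vec_def[of x y] inner_axis')
    then show ?thesis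
    proof (cases "y = 0")
      case False
      with mult_right_mono[OF \<open>1 - cos (x \<bullet> y) \<le> _\<close> J_nonneg[OF False]]
      show ?thesis by (simp add: sum_distrib_right mult.assoc)
    qed simp
  qed
  then have "jump_exponent x
      \<le> (\<integral>y. 2 ^ CARD('n) * (\<Sum>k\<in>UNIV. (1 - cos (axis k (x $ k) \<bullet> y)) * J y) \<partial>lborel)"
    unfolding jump_exponent_def
    by (intro Bochner_Integration.integral_mono integrable_jump_integrand integrable_mult_right
        Bochner_Integration.integrable_sum)
  then show ?thesis
    by (simp add: jump_exponent_def integrable_jump_integrand)
qed

lemma jump_exponent_axis_le:
  assumes c1: "c1 > 0" and c2: "c2 \<ge> 1"
    and J_comp: "\<And>y. y \<noteq> 0 \<Longrightarrow> j (norm y / c2) / c1 \<le> J y \<and> J y \<le> c1 * j (c2 * norm y)"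
  shows "jump_exponent (axis k s) \<le> c1\<^sup>2 * jump_exponent (axis l (s / c2\<^sup>2))"
proof -
  define \<sigma> where "\<sigma> i = (if i = k then l else if i = l then k else i)" for i
  have \<sigma>: "bij \<sigma>"
    by (rule o_bij[of \<sigma>]) (auto simp: \<sigma>_def)
  define g where "g v = (1 - cos (axis l (s / c2\<^sup>2) \<bullet> v)) * J v" for v :: "real^'n"
  have [measurable]: "g \<in> borel_measurable borel"
    unfolding g_def by measurable
  define h where "h y = g (c2\<^sup>2 *\<^sub>R permute_coords \<sigma> y)" for y
  have c2sq: "c2\<^sup>2 \<noteq> 0"
    using c2 by simp
  have "(1 - cos (axis k s \<bullet> y)) * J y \<le> c1\<^sup>2 * h y" for y
  proof (cases "y = 0")
    case False
    have Jy: "J y \<le> c1\<^sup>2 * J (c2\<^sup>2 *\<^sub>R permute_coords \<sigma> y)"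
      using comparable_density_le_rescaled[OF c1 _ J_comp False] c2 \<sigma> by (simp add: norm_permute_coords)
    have "axis l (s / c2\<^sup>2) \<bullet> (c2\<^sup>2 *\<^sub>R permute_coords \<sigma> y) = axis k s \<bullet> y"
      using c2sq by (simp add: inner_axis' \<sigma>_def)
    then show ?thesis
      using mult_left_mono[OF Jy, of "1 - cos (axis k s \<bullet> y)"] by (simp add: h_def g_def mult.left_commute)
  qed (simp add: h_def g_def)
  moreover have "integrable lborel h"
  proof -
    have "integrable lborel g"
      unfolding g_def by (rule integrable_jump_integrand)
    then have "integrable lborel (\<lambda>y. g (c2\<^sup>2 *\<^sub>R y))"
      by (simp add: integrable_lborel_scaleR_iff[OF c2sq])
    then show ?thesis
      unfolding h_def by (subst integrable_lborel_permute_coords_iff[OF \<sigma>]) auto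
  qed
  ultimately have "jump_exponent (axis k s) \<le> (\<integral>y. c1\<^sup>2 * h y \<partial>lborel)"
    unfolding jump_exponent_def
    by (intro Bochner_Integration.integral_mono integrable_jump_integrand integrable_mult_right)
  also have "\<dots> = c1\<^sup>2 * integral\<^sup>L lborel h"
    by simp
  also have "\<dots> = c1\<^sup>2 * integral\<^sup>L lborel (\<lambda>y. g (c2\<^sup>2 *\<^sub>R y))"
    unfolding h_def by (subst integral_lborel_permute_coords[OF \<sigma>]) auto
  also have "\<dots> \<le> c1\<^sup>2 * (\<bar>c2\<^sup>2\<bar> ^ CARD('n) * integral\<^sup>L lborel (\<lambda>y. g (c2\<^sup>2 *\<^sub>R y)))"
  proof -
    have "0 \<le> integral\<^sup>L lborel (\<lambda>y. g (c2\<^sup>2 *\<^sub>R y))"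
      unfolding g_def by (intro Bochner_Integration.integral_nonneg jump_integrand_nonneg)
    moreover have "1 \<le> \<bar>c2\<^sup>2\<bar> ^ CARD('n)"
      using c2 by (simp add: one_le_power)
    ultimately show ?thesis
      by (intro mult_left_mono) (auto simp: mult_le_cancel_right1)
  qed
  also have "\<dots> = c1\<^sup>2 * jump_exponent (axis l (s / c2\<^sup>2))"
    using integral_lborel_scaleR[OF c2sq, of g] by (simp add: jump_exponent_def g_def[abs_def])
  finally show ?thesis .
qed

lemma levy_exponent_eq: "levy_exponent A J \<xi> = \<xi> \<bullet> (A *v \<xi>) + jump_exponent \<xi>"
  by (simp add: levy_exponent_def jump_exponent_def)

lemma levy_exponent_nonneg:
  assumes "\<And>\<xi>. 0 \<le> \<xi> \<bullet> (A *v \<xi>)"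
  shows "0 \<le> levy_exponent A J \<xi>"
  using assms[of \<xi>] jump_exponent_nonneg[of \<xi>] by (simp add: levy_exponent_eq)

lemma levy_exponent_double_le: "levy_exponent A J (2 *\<^sub>R \<xi>) \<le> 4 * levy_exponent A J \<xi>"
  using jump_exponent_double_le[of \<xi>]
  by (simp add: levy_exponent_eq matrix_vector_mult_scaleR algebra_simps)

lemma bdd_above_levy_exponent_cball: "bdd_above (levy_exponent A J ` cball 0 r)"
proof -
  obtain B where B: "\<And>x. norm (A *v x) \<le> norm x * B"
    using bounded_linear.bounded[OF matrix_vector_mul_bounded_linear] by blast
  define K where "K = (\<integral>z. min 1 (norm z ^ 2) * J z \<partial>lborel)"
  have "0 \<le> K"
    unfolding K_def
    by (intro Bochner_Integration.integral_nonneg, case_tac "x = 0") (auto intro!: mult_nonneg_nonneg J_nonneg)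
  have "levy_exponent A J \<xi> \<le> r\<^sup>2 * \<bar>B\<bar> + max 2 (r\<^sup>2) * K" if "norm \<xi> \<le> r" for \<xi>
  proof -
    have sq: "norm \<xi> ^ 2 \<le> r\<^sup>2"
      using that by (intro power_mono) auto
    have "\<xi> \<bullet> (A *v \<xi>) \<le> norm \<xi> * (norm \<xi> * B)"
      using norm_cauchy_schwarz[of \<xi> "A *v \<xi>"] B[of \<xi>] by (meson mult_left_mono norm_ge_zero order_trans)
    also have "\<dots> \<le> norm \<xi> ^ 2 * \<bar>B\<bar>"
      by (simp add: power2_eq_square mult.assoc mult_left_mono)
    also have "\<dots> \<le> r\<^sup>2 * \<bar>B\<bar>"
      using sq by (intro mult_right_mono) auto
    finally have "\<xi> \<bullet> (A *v \<xi>) \<le> r\<^sup>2 * \<bar>B\<bar>" .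
    moreover have "jump_exponent \<xi> \<le> max 2 (norm \<xi> ^ 2) * K"
      unfolding K_def by (rule jump_exponent_le)
    moreover have "max 2 (norm \<xi> ^ 2) * K \<le> max 2 (r\<^sup>2) * K"
      using sq \<open>0 \<le> K\<close> by (intro mult_right_mono) auto
    ultimately show ?thesis
      unfolding levy_exponent_eq by linarith
  qed
  then show ?thesis
    by (intro bdd_aboveI2) simp
qed

lemma levy_exponent_double_le_axis_bound:
  assumes A_nonneg: "\<And>\<xi>. 0 \<le> \<xi> \<bullet> (A *v \<xi>)"
    and A_comp: "\<And>y. a * norm y ^ 2 / c1 \<le> y \<bullet> (A *v y) \<and> y \<bullet> (A *v y) \<le> c1 * a * norm y ^ 2"
    and c1: "c1 > 0" and c2: "c2 \<ge> 1"
    and J_comp: "\<And>y. y \<noteq> 0 \<Longrightarrow> j (norm y / c2) / c1 \<le> J y \<and> J y \<le> c1 * j (c2 * norm y)"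
    and bound: "\<And>s. \<bar>s\<bar> \<le> norm x \<Longrightarrow> levy_exponent A J (axis l s) \<le> M"
  shows "levy_exponent A J (2 *\<^sub>R x) \<le> 4 * c1\<^sup>2 * real (1 + 2 ^ CARD('n) * CARD('n)) * M"
proof -
  have jump_le: "jump_exponent (axis l s) \<le> M" if "\<bar>s\<bar> \<le> norm x" for s
    using bound[OF that] A_nonneg[of "axis l s"] by (simp add: levy_exponent_eq)
  have "x \<bullet> (A *v x) \<le> c1\<^sup>2 * (axis l (norm x) \<bullet> (A *v axis l (norm x)))"
    by (rule quadratic_form_le_axis[OF c1 A_comp])
  also have "\<dots> \<le> c1\<^sup>2 * M"
    using bound[of "norm x"] jump_exponent_nonneg[of "axis l (norm x)"]
    by (intro mult_left_mono) (auto simp: levy_exponent_eq)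
  finally have quadratic: "x \<bullet> (A *v x) \<le> c1\<^sup>2 * M" .
  have "jump_exponent x \<le> 2 ^ CARD('n) * (\<Sum>k\<in>UNIV. jump_exponent (axis k (x $ k)))"
    by (rule jump_exponent_le_sum_axis)
  also have "\<dots> \<le> 2 ^ CARD('n) * (\<Sum>k\<in>(UNIV::'n set). c1\<^sup>2 * M)"
  proof (intro mult_left_mono sum_mono)
    fix k
    have "\<bar>x $ k / c2\<^sup>2\<bar> \<le> \<bar>x $ k\<bar>"
      using divide_left_mono[of 1 "c2\<^sup>2" "\<bar>x $ k\<bar>"] c2 by (simp add: abs_div one_le_power)
    also have "\<dots> \<le> norm x"
      by (rule component_le_norm_cart)
    finally have "jump_exponent (axis l (x $ k / c2\<^sup>2)) \<le> M"
      by (rule jump_le)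
    then show "jump_exponent (axis k (x $ k)) \<le> c1\<^sup>2 * M"
      using jump_exponent_axis_le[OF c1 c2 J_comp, of k "x $ k" l] by (simp add: mult_left_mono order_trans)
  qed simp
  finally have jump: "jump_exponent x \<le> 2 ^ CARD('n) * CARD('n) * c1\<^sup>2 * M"
    by simp
  have "levy_exponent A J (2 *\<^sub>R x) \<le> 4 * (x \<bullet> (A *v x) + jump_exponent x)"
    using levy_exponent_double_le[of A x] by (simp add: levy_exponent_eq)
  also have "\<dots> \<le> 4 * c1\<^sup>2 * real (1 + 2 ^ CARD('n) * CARD('n)) * M"
    using quadratic jump by (simp add: algebra_simps)
  finally show ?thesis .
qed

end

lemma Psi1_star_axis: "Psi1_star \<Psi> r = Sup ((\<lambda>s. \<Psi> (axis last_idx s)) ` {-r<..<r})"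
  by (simp add: Psi1_star_def axis_def)

lemma axis_le_Psi1_star:
  assumes bdd: "bdd_above (\<Psi> ` cball 0 r)" and s: "\<bar>s\<bar> < r"
  shows "\<Psi> (axis last_idx s) \<le> Psi1_star \<Psi> r"
  unfolding Psi1_star_axis
proof (rule cSup_upper)
  show "\<Psi> (axis last_idx s) \<in> (\<lambda>s. \<Psi> (axis last_idx s)) ` {-r<..<r}"
    using s by (intro imageI) (simp add: abs_less_iff)
  show "bdd_above ((\<lambda>s. \<Psi> (axis last_idx s)) ` {-r<..<r})"
    by (rule bdd_above_mono[OF bdd]) (auto simp: norm_axis)
qed

lemma Psi1_star_le_Psi_star:
  assumes bdd: "bdd_above (\<Psi> ` cball 0 r)" and r: "r > 0"
  shows "Psi1_star \<Psi> r \<le> Psi_star \<Psi> r"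
  unfolding Psi1_star_axis Psi_star_def
  using r by (intro cSup_subset_mono bdd) (auto simp: norm_axis)

lemma Psi_star_le:
  assumes "r \<ge> 0" and "\<And>\<xi>. norm \<xi> \<le> r \<Longrightarrow> \<Psi> \<xi> \<le> B"
  shows "Psi_star \<Psi> r \<le> B"
  unfolding Psi_star_def using assms by (intro cSup_least) auto

lemma Psi1_star_nonneg:
  assumes "\<And>\<xi>. 0 \<le> \<Psi> \<xi>" and "bdd_above (\<Psi> ` cball 0 r)" and "r > 0"
  shows "0 \<le> Psi1_star \<Psi> r"
  using assms(1)[of "axis last_idx 0"] axis_le_Psi1_star[OF assms(2), of 0] assms(3) by simp

lemma Psi_star_levy_exponent_le:
  fixes J :: "(real, 'd::{finite,linorder}) vec \<Rightarrow> real"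
  assumes "levy_density J"
    and A_nonneg: "\<And>\<xi>. 0 \<le> \<xi> \<bullet> (A *v \<xi>)"
    and A_comp: "\<And>y. a * norm y ^ 2 / c1 \<le> y \<bullet> (A *v y) \<and> y \<bullet> (A *v y) \<le> c1 * a * norm y ^ 2"
    and c1: "c1 > 0" and c2: "c2 \<ge> 1"
    and J_comp: "\<And>y. y \<noteq> 0 \<Longrightarrow> j (norm y / c2) / c1 \<le> J y \<and> J y \<le> c1 * j (c2 * norm y)"
    and r: "r > 0"
  shows "Psi_star (levy_exponent A J) r
    \<le> 4 * c1\<^sup>2 * real (1 + 2 ^ CARD('d) * CARD('d)) * Psi1_star (levy_exponent A J) r"
proof (rule Psi_star_le)
  interpret levy_density J by fact
  fix \<xi> :: "(real, 'd) vec"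
  assume "norm \<xi> \<le> r"
  then have half: "norm ((1/2) *\<^sub>R \<xi>) < r"
    using r by simp
  have "levy_exponent A J (2 *\<^sub>R (1/2) *\<^sub>R \<xi>)
      \<le> 4 * c1\<^sup>2 * real (1 + 2 ^ CARD('d) * CARD('d)) * Psi1_star (levy_exponent A J) r"
  proof (rule levy_exponent_double_le_axis_bound[OF A_nonneg A_comp c1 c2 J_comp])
    fix s
    assume "\<bar>s\<bar> \<le> norm ((1/2) *\<^sub>R \<xi>)"
    then show "levy_exponent A J (axis last_idx s) \<le> Psi1_star (levy_exponent A J) r"
      using half by (intro axis_le_Psi1_star bdd_above_levy_exponent_cball) simp
  qed
  then show "levy_exponent A J \<xi> \<le> 4 * c1\<^sup>2 * real (1 + 2 ^ CARD('d) * CARD('d)) * Psi1_star (levy_exponent A J) r"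
    by simp
qed (use r in simp)

theorem lemma2p9:
  fixes A :: "((real, 'd::{finite,linorder}) vec, 'd) vec"
    and J :: "(real, 'd) vec \<Rightarrow> real"
    and j :: "real \<Rightarrow> real"
    and a c1 c2 :: real
  assumes A_sym: "transpose A = A"
    and A_nonneg: "\<And>\<xi>. \<xi> \<bullet> (A *v \<xi>) \<ge> 0"
    and J_meas: "J \<in> borel_measurable lborel"
    and J_nonneg: "\<And>y. y \<noteq> 0 \<Longrightarrow> J y \<ge> 0"
    and J_symm: "\<And>y. y \<noteq> 0 \<Longrightarrow> J (- y) = J y"
    and J_int: "integrable lborel (\<lambda>z. min 1 (norm z ^ 2) * J z)"
    and Psi_unbounded: "\<not> bdd_above (range (levy_exponent A J))"
    and j_nonneg: "\<And>t. t > 0 \<Longrightarrow> j t \<ge> 0"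
    and a_nonneg: "a \<ge> 0" and c1: "c1 \<ge> 1" and c2: "c2 \<ge> 1"
    and A_comp: "\<And>y. a * norm y ^ 2 / c1 \<le> y \<bullet> (A *v y) \<and> y \<bullet> (A *v y) \<le> c1 * a * norm y ^ 2"
    and J_comp: "\<And>y. y \<noteq> 0 \<Longrightarrow> j (norm y / c2) / c1 \<le> J y \<and> J y \<le> c1 * j (c2 * norm y)"
  shows "\<exists>c>0. \<forall>r>0.
           Psi1_star (levy_exponent A J) r / c \<le> Psi_star (levy_exponent A J) r \<and>
           Psi_star (levy_exponent A J) r \<le> c * Psi1_star (levy_exponent A J) r"
proof -
  have J: "levy_density J"
    using J_meas J_nonneg J_int by unfold_locales simp_all
  define C where "C = 4 * c1\<^sup>2 * real (1 + 2 ^ CARD('d) * CARD('d))"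
  have C: "C \<ge> 1"
  proof -
    have "1 * 1 \<le> c1\<^sup>2 * real (1 + 2 ^ CARD('d) * CARD('d))"
      using c1 by (intro mult_mono) (auto simp: one_le_power)
    then show ?thesis
      by (simp add: C_def)
  qed
  have "Psi1_star (levy_exponent A J) r / C \<le> Psi_star (levy_exponent A J) r \<and>
      Psi_star (levy_exponent A J) r \<le> C * Psi1_star (levy_exponent A J) r" if r: "r > 0" for r
  proof
    have bdd: "bdd_above (levy_exponent A J ` cball 0 r)"
      using levy_density.bdd_above_levy_exponent_cball[OF J] .
    have "0 \<le> Psi1_star (levy_exponent A J) r"
      using Psi1_star_nonneg[OF levy_density.levy_exponent_nonneg[OF J A_nonneg] bdd r] .
    then have "Psi1_star (levy_exponent A J) r / C \<le> Psi1_star (levy_exponent A J) r"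
      using divide_left_mono[of 1 C "Psi1_star (levy_exponent A J) r"] C by simp
    then show "Psi1_star (levy_exponent A J) r / C \<le> Psi_star (levy_exponent A J) r"
      using Psi1_star_le_Psi_star[OF bdd r] by linarith
    show "Psi_star (levy_exponent A J) r \<le> C * Psi1_star (levy_exponent A J) r"
      unfolding C_def using c1 c2 by (intro Psi_star_levy_exponent_le[OF J A_nonneg A_comp _ _ J_comp r]) auto
  qed
  then show ?thesis
    using C by (intro exI[of _ C]) auto
qed

end
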